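(* Let $n\ge3$, let $G_2=\overline{L(K_{2,n})}$, and let $G_1$ be a finite bipartite graph with bipartition $(X,Y)$ ($X,Y$ nonempty) such that some vertex is adjacent to all of $X$ and some vertex is adjacent to all of $Y$, and with $\Delta(G_1)\ge n$. If the two-squares graph does not embed in $G_1$, then $G_1$ and $G_2$ are $\mathcal{C}$-$\mathrm{HH}$-symmetric.
   Context: $\Delta$ denotes maximum degree. "Embeds" means is isomorphic to an induced subgraph. The two-squares graph is the $6$-cycle $v_1\dots v_6v_1$ with the single chord $v_3v_6$. $\overline{L(K_{2,n})}$ is the bipartite graph with parts $\{x_1,\dots,x_n\}$, $\{y_1,\dots,y_n\}$ and $x_i\sim y_j$ iff $i\ne j$. A homomorphism maps edges to edges. $G_1$ is $\mathcal{C}$-$\mathrm{HH}$-morphic to $G_2$ if every homomorphism from a finite connected induced subgraph $A$ of $G_1$ onto an induced subgraph $B$ of $G_2$ extends to a homomorphism $G_1\to G_2$; $G_1,G_2$ are $\mathcal{C}$-$\mathrm{HH}$-symmetric if each is $\mathcal{C}$-$\mathrm{HH}$-morphic to the other. *)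

theory Defs
  imports Main
begin

definition simple_graph :: "'a set \<Rightarrow> ('a \<Rightarrow> 'a \<Rightarrow> bool) \<Rightarrow> bool" where
  "simple_graph V E \<longleftrightarrow> (\<forall>u v. E u v \<longrightarrow> u \<in> V \<and> v \<in> V) \<and> (\<forall>u v. E u v \<longrightarrow> E v u) \<and> (\<forall>v. \<not> E v v)"

definition graph_hom :: "'a set \<Rightarrow> ('a \<Rightarrow> 'a \<Rightarrow> bool) \<Rightarrow> 'b set \<Rightarrow> ('b \<Rightarrow> 'b \<Rightarrow> bool) \<Rightarrow> ('a \<Rightarrow> 'b) \<Rightarrow> bool" where
  "graph_hom V1 E1 V2 E2 f \<longleftrightarrow> (\<forall>v\<in>V1. f v \<in> V2) \<and> (\<forall>u\<in>V1. \<forall>v\<in>V1. E1 u v \<longrightarrow> E2 (f u) (f v))"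

definition connected_on :: "('a \<Rightarrow> 'a \<Rightarrow> bool) \<Rightarrow> 'a set \<Rightarrow> bool" where
  "connected_on E S \<longleftrightarrow> S \<noteq> {} \<and>
     (\<forall>u\<in>S. \<forall>v\<in>S. (u, v) \<in> {(a, b). a \<in> S \<and> b \<in> S \<and> E a b}\<^sup>*)"

text \<open>Homomorphisms between induced subgraphs G1[S] and G2[T] are exactly graph_hom S E1 T E2.\<close>
definition C_HH_morphic :: "'a set \<Rightarrow> ('a \<Rightarrow> 'a \<Rightarrow> bool) \<Rightarrow> 'b set \<Rightarrow> ('b \<Rightarrow> 'b \<Rightarrow> bool) \<Rightarrow> bool" where
  "C_HH_morphic V1 E1 V2 E2 \<longleftrightarrow>
     (\<forall>S T f. S \<subseteq> V1 \<and> finite S \<and> connected_on E1 S \<and> T \<subseteq> V2 \<and>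
        graph_hom S E1 T E2 f \<and> f ` S = T \<longrightarrow>
        (\<exists>g. graph_hom V1 E1 V2 E2 g \<and> (\<forall>v\<in>S. g v = f v)))"

definition C_HH_symmetric :: "'a set \<Rightarrow> ('a \<Rightarrow> 'a \<Rightarrow> bool) \<Rightarrow> 'b set \<Rightarrow> ('b \<Rightarrow> 'b \<Rightarrow> bool) \<Rightarrow> bool" where
  "C_HH_symmetric V1 E1 V2 E2 \<longleftrightarrow> C_HH_morphic V1 E1 V2 E2 \<and> C_HH_morphic V2 E2 V1 E1"

text \<open>Complement of the line graph of K_{2,n}: x_i = (False, i), y_j = (True, j), 1 \<le> i,j \<le> n,
  x_i ~ y_j iff i \<noteq> j.\<close>
definition co_LK2n_V :: "nat \<Rightarrow> (bool \<times> nat) set" where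
  "co_LK2n_V n = UNIV \<times> {1..n}"

definition co_LK2n_E :: "nat \<Rightarrow> bool \<times> nat \<Rightarrow> bool \<times> nat \<Rightarrow> bool" where
  "co_LK2n_E n u v \<longleftrightarrow> u \<in> co_LK2n_V n \<and> v \<in> co_LK2n_V n \<and> fst u \<noteq> fst v \<and> snd u \<noteq> snd v"

definition two_squares_E :: "nat \<Rightarrow> nat \<Rightarrow> bool" where
  "two_squares_E i j \<longleftrightarrow> {i, j} \<in> {{1,2},{2,3},{3,4},{4,5},{5,6},{6,1},{3,6}}"

definition two_squares_embeds :: "'a set \<Rightarrow> ('a \<Rightarrow> 'a \<Rightarrow> bool) \<Rightarrow> bool" where
  "two_squares_embeds V E \<longleftrightarrow> (\<exists>h. inj_on h {1..6::nat} \<and> h ` {1..6} \<subseteq> V \<and>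
      (\<forall>i\<in>{1..6}. \<forall>j\<in>{1..6}. E (h i) (h j) \<longleftrightarrow> two_squares_E i j))"

definition degree :: "'a set \<Rightarrow> ('a \<Rightarrow> 'a \<Rightarrow> bool) \<Rightarrow> 'a \<Rightarrow> nat" where
  "degree V E v = card {u \<in> V. E v u}"

end

theory Submission
  imports Defs
begin

text \<open>
  Homomorphisms from \<open>\<overline>L(K\<^sub>2\<^sub>,\<^sub>n)\<close> into \<open>G\<^sub>1\<close> extend because
  \<open>\<overline>L(K\<^sub>2\<^sub>,\<^sub>n)\<close> is bipartite and \<open>G\<^sub>1\<close> has a vertex on each side adjacent to
  the whole other side: every vertex outside the domain is sent to one of these two.
  Conversely, without an induced two-squares graph, the neighbourhoods of the vertices on one side
  of \<open>G\<^sub>1\<close> are nested. Hence a finite connected \<open>S\<close> with at least one edge contains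
  vertices \<open>a \<in> X\<close>, \<open>b \<in> Y\<close> adjacent to all of \<open>S \<inter> Y\<close>, resp. \<open>S \<inter> X\<close>,
  and folding \<open>X - S\<close> onto \<open>a\<close> and \<open>Y - S\<close> onto \<open>b\<close> retracts \<open>G\<^sub>1\<close> onto
  \<open>S\<close>; composing with the retraction extends any homomorphism on \<open>S\<close>. A single vertex
  is handled by folding \<open>G\<^sub>1\<close> onto an edge.
\<close>

definition neighbourhoods_nested :: "('a \<Rightarrow> 'a \<Rightarrow> bool) \<Rightarrow> 'a set \<Rightarrow> bool" where
  "neighbourhoods_nested E A \<longleftrightarrow>
     (\<forall>p\<in>A. \<forall>q\<in>A. {y. E p y} \<subseteq> {y. E q y} \<or> {y. E q y} \<subseteq> {y. E p y})"

lemma connected_on_has_neighbour: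
  assumes "connected_on E S" and "s \<in> S" and "z \<in> S" and "s \<noteq> z"
  shows "\<exists>w\<in>S. E s w"
proof -
  have "(s, z) \<in> {(a, b). a \<in> S \<and> b \<in> S \<and> E a b}\<^sup>*"
    using assms unfolding connected_on_def by blast
  then show ?thesis using \<open>s \<noteq> z\<close> by (cases rule: converse_rtranclE) auto
qed

lemma two_squares_embeds_bipartite:
  assumes sym: "\<And>u v. E u v \<Longrightarrow> E v u"
    and bip: "\<forall>u v. E u v \<longrightarrow> (u \<in> P \<and> v \<in> Q) \<or> (u \<in> Q \<and> v \<in> P)" and "P \<inter> Q = {}"
    and P: "p1 \<in> P" "p3 \<in> P" "p5 \<in> P" and Q: "q2 \<in> Q" "q4 \<in> Q" "q6 \<in> Q"
    and "{p1, q2, p3, q4, p5, q6} \<subseteq> V"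
    and "distinct [p1, p3, p5]" and "distinct [q2, q4, q6]"
    and "E p1 q2" "E p3 q2" "E p3 q4" "E p5 q4" "E p5 q6" "E p1 q6" "E p3 q6"
    and "\<not> E p1 q4" "\<not> E p5 q2"
  shows "two_squares_embeds V E"
proof -
  define h where "h i = [p1, q2, p3, q4, p5, q6] ! (i - 1)" for i :: nat
  have six: "{1..6::nat} = {1, 2, 3, 4, 5, 6}" by auto
  have noPP: "\<not> E u v" if "u \<in> P" "v \<in> P" for u v using bip \<open>P \<inter> Q = {}\<close> that by blast
  have noQQ: "\<not> E u v" if "u \<in> Q" "v \<in> Q" for u v using bip \<open>P \<inter> Q = {}\<close> that by blast
  have PQ: "u \<noteq> v" if "u \<in> P" "v \<in> Q" for u v using \<open>P \<inter> Q = {}\<close> that by blast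
  show ?thesis
    unfolding two_squares_embeds_def
  proof (intro exI conjI)
    show "inj_on h {1..6}"
      using assms PQ unfolding six inj_on_def h_def by (auto simp: numeral_eq_Suc)
    show "h ` {1..6} \<subseteq> V" using assms unfolding six h_def by (auto simp: numeral_eq_Suc)
    show "\<forall>i\<in>{1..6}. \<forall>j\<in>{1..6}. E (h i) (h j) = two_squares_E i j"
      using assms noPP noQQ sym unfolding six h_def two_squares_E_def
      by (auto simp: numeral_eq_Suc doubleton_eq_iff)
  qed
qed

lemma neighbourhoods_nested_if_no_two_squares:
  assumes sym: "\<And>u v. E u v \<Longrightarrow> E v u"
    and bip: "\<forall>u v. E u v \<longrightarrow> (u \<in> P \<and> v \<in> Q) \<or> (u \<in> Q \<and> v \<in> P)" and "P \<inter> Q = {}"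
    and "P \<subseteq> V" and "Q \<subseteq> V"
    and p0: "p0 \<in> P" "\<forall>q\<in>Q. E p0 q" and q0: "q0 \<in> Q" "\<forall>p\<in>P. E q0 p"
    and "\<not> two_squares_embeds V E"
  shows "neighbourhoods_nested E P"
  unfolding neighbourhoods_nested_def
proof (intro ballI, rule ccontr)
  fix p p' assume p: "p \<in> P" "p' \<in> P"
    and "\<not> ({y. E p y} \<subseteq> {y. E p' y} \<or> {y. E p' y} \<subseteq> {y. E p y})"
  then obtain y2 y4 where e: "E p y2" "\<not> E p' y2" "E p' y4" "\<not> E p y4" by auto
  have y: "y2 \<in> Q" "y4 \<in> Q" using bip e p \<open>P \<inter> Q = {}\<close> by blast+
  \<comment> \<open>the two-squares graph \<open>p y2 p0 y4 p' q0\<close> with chord \<open>p0 q0\<close>\<close>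
  have "two_squares_embeds V E"
  proof (rule two_squares_embeds_bipartite[OF sym bip \<open>P \<inter> Q = {}\<close> p(1) p0(1) p(2) y(1) y(2) q0(1)])
    show "{p, y2, p0, y4, p', q0} \<subseteq> V" using assms p y by auto
    show "distinct [p, p0, p']" using e p0 y by auto
    show "distinct [y2, y4, q0]" using e q0 p sym by auto
  qed (use e p p0 q0 y sym in auto)
  with assms show False by simp
qed

lemma neighbourhoods_nested_subset:
  "neighbourhoods_nested E A \<Longrightarrow> B \<subseteq> A \<Longrightarrow> neighbourhoods_nested E B"
  unfolding neighbourhoods_nested_def by blast

lemma neighbourhoods_nested_has_largest:
  assumes "finite A" and "A \<noteq> {}" and "neighbourhoods_nested E A"
  shows "\<exists>a\<in>A. \<forall>a'\<in>A. {y. E a' y} \<subseteq> {y. E a y}"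
  using assms
proof (induction A rule: finite_ne_induct)
  case (insert x A)
  then obtain a where a: "a \<in> A" "\<forall>a'\<in>A. {y. E a' y} \<subseteq> {y. E a y}"
    using neighbourhoods_nested_subset by blast
  have "{y. E x y} \<subseteq> {y. E a y} \<or> {y. E a y} \<subseteq> {y. E x y}"
    using insert.prems a(1) unfolding neighbourhoods_nested_def by blast
  then show ?case
  proof
    assume "{y. E x y} \<subseteq> {y. E a y}"
    with a show ?case by blast
  next
    assume "{y. E a y} \<subseteq> {y. E x y}"
    with a show ?case by blast
  qed
qed simp

lemma nested_side_has_dominating_vertex:
  assumes nested: "neighbourhoods_nested E P" and sym: "\<And>u v. E u v \<Longrightarrow> E v u"
    and bip: "\<forall>u v. E u v \<longrightarrow> (u \<in> P \<and> v \<in> Q) \<or> (u \<in> Q \<and> v \<in> P)" and "P \<inter> Q = {}"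
    and "finite S" and "S \<inter> P \<noteq> {}" and nb: "\<forall>v\<in>S. \<exists>w\<in>S. E v w"
  shows "\<exists>a\<in>S \<inter> P. \<forall>y\<in>S \<inter> Q. E a y"
proof -
  obtain a where a: "a \<in> S \<inter> P" and largest: "\<forall>a'\<in>S \<inter> P. {y. E a' y} \<subseteq> {y. E a y}"
    using neighbourhoods_nested_has_largest[of "S \<inter> P" E] neighbourhoods_nested_subset[OF nested]
      \<open>finite S\<close> \<open>S \<inter> P \<noteq> {}\<close> by blast
  have "E a y" if y: "y \<in> S \<inter> Q" for y
  proof -
    obtain w where w: "w \<in> S" "E y w" using nb y by blast
    then have "w \<in> S \<inter> P" using bip y \<open>P \<inter> Q = {}\<close> by blast
    with largest sym w(2) show "E a y" by blast
  qed
  with a show ?thesis by blast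
qed

lemma bipartite_retraction:
  assumes sym: "\<And>u v. E u v \<Longrightarrow> E v u"
    and bip: "\<forall>u v. E u v \<longrightarrow> (u \<in> X \<and> v \<in> Y) \<or> (u \<in> Y \<and> v \<in> X)" and "X \<inter> Y = {}"
    and a: "a \<in> S \<inter> X" "\<forall>y\<in>S \<inter> Y. E a y" and b: "b \<in> S \<inter> Y" "\<forall>x\<in>S \<inter> X. E b x"
  shows "\<exists>r. graph_hom V E S E r \<and> (\<forall>v\<in>S. r v = v)"
proof -
  define r where "r v = (if v \<in> S then v else if v \<in> X then a else b)" for v
  have edge: "E (r u) (r v)" if "E u v" "u \<in> X" for u v
  proof -
    have "v \<in> Y" "v \<notin> X" using bip that \<open>X \<inter> Y = {}\<close> by blast+
    then show ?thesis using that a b sym unfolding r_def by auto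
  qed
  have "graph_hom V E S E r"
    unfolding graph_hom_def
  proof (intro conjI ballI impI)
    show "r v \<in> S" for v using a b unfolding r_def by auto
    show "E (r u) (r v)" if "E u v" for u v
      using edge[OF that] edge[OF sym[OF that]] bip that sym by blast
  qed
  then show ?thesis unfolding r_def by auto
qed

lemma graph_hom_extends_along_retraction:
  assumes "graph_hom V E S E r" and "\<forall>v\<in>S. r v = v"
    and "graph_hom S E T E2 f" and "T \<subseteq> V2"
  shows "\<exists>g. graph_hom V E V2 E2 g \<and> (\<forall>v\<in>S. g v = f v)"
proof (intro exI conjI)
  show "graph_hom V E V2 E2 (f \<circ> r)" using assms unfolding graph_hom_def by auto
  show "\<forall>v\<in>S. (f \<circ> r) v = f v" using assms(2) by simp
qed

lemma bipartite_hom_onto_edge: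
  assumes bip: "\<forall>u v. E u v \<longrightarrow> (u \<in> X \<and> v \<in> Y) \<or> (u \<in> Y \<and> v \<in> X)" and "X \<inter> Y = {}"
    and "w \<in> V2" "t \<in> V2" "E2 w t" "E2 t w"
  shows "\<exists>g. graph_hom V E V2 E2 g \<and> g s = w"
proof -
  define g where "g v = (if v \<in> X \<longleftrightarrow> s \<in> X then w else t)" for v
  have "graph_hom V E V2 E2 g"
    unfolding graph_hom_def
  proof (intro conjI ballI impI)
    show "g v \<in> V2" for v using assms unfolding g_def by simp
    show "E2 (g u) (g v)" if "E u v" for u v
    proof -
      have "u \<in> X \<longleftrightarrow> v \<notin> X" using bip that \<open>X \<inter> Y = {}\<close> by blast
      then show ?thesis using assms unfolding g_def by auto
    qed
  qed
  then show ?thesis unfolding g_def by auto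
qed

lemma C_HH_morphic_if_neighbourhoods_nested:
  assumes sym: "\<And>u v. E u v \<Longrightarrow> E v u"
    and bip: "\<forall>u v. E u v \<longrightarrow> (u \<in> X \<and> v \<in> Y) \<or> (u \<in> Y \<and> v \<in> X)" and "X \<inter> Y = {}"
    and "neighbourhoods_nested E X" and "neighbourhoods_nested E Y"
    and sym2: "\<And>u v. E2 u v \<Longrightarrow> E2 v u" and no_isolated: "\<forall>w\<in>V2. \<exists>t\<in>V2. E2 w t"
  shows "C_HH_morphic V E V2 E2"
  unfolding C_HH_morphic_def
proof (intro allI impI)
  fix S T f
  assume "S \<subseteq> V \<and> finite S \<and> connected_on E S \<and> T \<subseteq> V2 \<and> graph_hom S E T E2 f \<and> f ` S = T"
  then have "finite S" and conn: "connected_on E S" and "T \<subseteq> V2" and hom: "graph_hom S E T E2 f"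
    by auto
  obtain s where s: "s \<in> S" using conn unfolding connected_on_def by blast
  show "\<exists>g. graph_hom V E V2 E2 g \<and> (\<forall>v\<in>S. g v = f v)"
  proof (cases "S = {s}")
    case True
    have "f s \<in> V2" using hom s \<open>T \<subseteq> V2\<close> unfolding graph_hom_def by auto
    then obtain t where "t \<in> V2" "E2 (f s) t" using no_isolated by blast
    then obtain g where "graph_hom V E V2 E2 g" "g s = f s"
      using bipartite_hom_onto_edge[OF bip \<open>X \<inter> Y = {}\<close> \<open>f s \<in> V2\<close>] sym2 by blast
    with True show ?thesis by auto
  next
    case False
    then obtain z where z: "z \<in> S" "z \<noteq> s" using s by blast
    have nb: "\<forall>v\<in>S. \<exists>w\<in>S. E v w"
    proof
      fix v assume v: "v \<in> S"
      show "\<exists>w\<in>S. E v w"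
      proof (cases "v = s")
        case True
        with connected_on_has_neighbour[OF conn v z(1)] z(2) show ?thesis by blast
      next
        case False
        with connected_on_has_neighbour[OF conn v s] show ?thesis by blast
      qed
    qed
    then obtain w where "w \<in> S" "E s w" using s by blast
    then have "S \<inter> X \<noteq> {}" "S \<inter> Y \<noteq> {}" using s bip by blast+
    have bip': "\<forall>u v. E u v \<longrightarrow> (u \<in> Y \<and> v \<in> X) \<or> (u \<in> X \<and> v \<in> Y)" and "Y \<inter> X = {}"
      using bip \<open>X \<inter> Y = {}\<close> by blast+
    obtain a where "a \<in> S \<inter> X" "\<forall>y\<in>S \<inter> Y. E a y"
      using nested_side_has_dominating_vertex[OF \<open>neighbourhoods_nested E X\<close> sym bip
          \<open>X \<inter> Y = {}\<close> \<open>finite S\<close> \<open>S \<inter> X \<noteq> {}\<close> nb] by blast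
    moreover obtain b where "b \<in> S \<inter> Y" "\<forall>x\<in>S \<inter> X. E b x"
      using nested_side_has_dominating_vertex[OF \<open>neighbourhoods_nested E Y\<close> sym bip'
          \<open>Y \<inter> X = {}\<close> \<open>finite S\<close> \<open>S \<inter> Y \<noteq> {}\<close> nb] by blast
    ultimately obtain r where "graph_hom V E S E r" "\<forall>v\<in>S. r v = v"
      using bipartite_retraction[OF sym bip \<open>X \<inter> Y = {}\<close>] by blast
    then show ?thesis
      using graph_hom_extends_along_retraction hom \<open>T \<subseteq> V2\<close> by blast
  qed
qed

lemma hom_preserves_sides_on_connected:
  fixes side :: "'b \<Rightarrow> bool"
  assumes conn: "connected_on E2 S" and hom: "graph_hom S E2 T E f"
    and flip: "\<And>u v. E2 u v \<Longrightarrow> side u \<noteq> side v"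
    and bip: "\<forall>u v. E u v \<longrightarrow> (u \<in> X \<and> v \<in> Y) \<or> (u \<in> Y \<and> v \<in> X)" and "X \<inter> Y = {}"
    and "s0 \<in> S" and "s \<in> S"
  shows "f s \<in> X \<longleftrightarrow> (side s = side s0 \<longleftrightarrow> f s0 \<in> X)"
proof -
  have "(s0, s) \<in> {(a, b). a \<in> S \<and> b \<in> S \<and> E2 a b}\<^sup>*"
    using assms unfolding connected_on_def by blast
  then show ?thesis
  proof (induction rule: rtrancl_induct)
    case (step y z)
    then have "E (f y) (f z)" and "side y \<noteq> side z"
      using hom flip unfolding graph_hom_def by auto
    moreover have "f y \<in> X \<longleftrightarrow> f z \<notin> X" if "E (f y) (f z)"
      using bip that \<open>X \<inter> Y = {}\<close> by blast
    ultimately show ?case using step.IH by auto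
  qed simp
qed

lemma C_HH_morphic_into_bipartite_with_dominating_vertices:
  fixes side :: "'b \<Rightarrow> bool"
  assumes flip: "\<And>u v. E2 u v \<Longrightarrow> side u \<noteq> side v"
    and sym: "\<And>u v. E u v \<Longrightarrow> E v u"
    and bip: "\<forall>u v. E u v \<longrightarrow> (u \<in> X \<and> v \<in> Y) \<or> (u \<in> Y \<and> v \<in> X)"
    and "X \<inter> Y = {}" and "X \<union> Y = V"
    and x0: "x0 \<in> X" "\<forall>y\<in>Y. E x0 y" and y0: "y0 \<in> Y" "\<forall>x\<in>X. E y0 x"
  shows "C_HH_morphic V2 E2 V E"
  unfolding C_HH_morphic_def
proof (intro allI impI)
  fix S T f
  assume "S \<subseteq> V2 \<and> finite S \<and> connected_on E2 S \<and> T \<subseteq> V \<and> graph_hom S E2 T E f \<and> f ` S = T"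
  then have conn: "connected_on E2 S" and "T \<subseteq> V" and hom: "graph_hom S E2 T E f" by auto
  obtain s0 where "s0 \<in> S" using conn unfolding connected_on_def by blast
  define P where "P v \<longleftrightarrow> (side v = side s0 \<longleftrightarrow> f s0 \<in> X)" for v
  define g where "g v = (if v \<in> S then f v else if P v then x0 else y0)" for v
  have fV: "f v \<in> V" if "v \<in> S" for v using hom \<open>T \<subseteq> V\<close> that unfolding graph_hom_def by auto
  have gV: "g v \<in> V" for v using fV x0 y0 \<open>X \<union> Y = V\<close> unfolding g_def by auto
  have g_side: "g v \<in> X \<longleftrightarrow> P v" for v
  proof (cases "v \<in> S")
    case True
    then show ?thesis
      using hom_preserves_sides_on_connected[OF conn hom flip bip \<open>X \<inter> Y = {}\<close> \<open>s0 \<in> S\<close> True]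
      unfolding g_def P_def by simp
  next
    case False
    then show ?thesis using x0(1) y0(1) \<open>X \<inter> Y = {}\<close> unfolding g_def by auto
  qed
  have outside: "E (g u) (g v)" if "u \<notin> S" and "P u \<noteq> P v" for u v
  proof (cases "P u")
    case True
    then have "g u = x0" "g v \<in> Y"
      using that g_side[of v] gV[of v] \<open>X \<union> Y = V\<close> unfolding g_def by auto
    then show ?thesis using x0(2) by simp
  next
    case False
    then have "g u = y0" "g v \<in> X" using that g_side[of v] unfolding g_def by auto
    then show ?thesis using y0(2) by simp
  qed
  have "graph_hom V2 E2 V E g"
    unfolding graph_hom_def
  proof (intro conjI ballI impI)
    show "g v \<in> V" for v by (rule gV)
    show "E (g u) (g v)" if "u \<in> V2" "v \<in> V2" "E2 u v" for u v
    proof -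
      have "P u \<noteq> P v" using flip[OF \<open>E2 u v\<close>] unfolding P_def by auto
      consider "u \<in> S" "v \<in> S" | "u \<notin> S" | "v \<notin> S" by blast
      then show ?thesis
      proof cases
        case 1
        then show ?thesis using hom \<open>E2 u v\<close> unfolding graph_hom_def g_def by simp
      next
        case 2
        then show ?thesis using outside \<open>P u \<noteq> P v\<close> by blast
      next
        case 3
        then show ?thesis using outside[of v u] \<open>P u \<noteq> P v\<close> sym by metis
      qed
    qed
  qed
  then show "\<exists>g. graph_hom V2 E2 V E g \<and> (\<forall>v\<in>S. g v = f v)" unfolding g_def by auto
qed

lemma co_LK2n_E_sym: "co_LK2n_E n u v \<Longrightarrow> co_LK2n_E n v u"
  unfolding co_LK2n_E_def by auto

lemma co_LK2n_E_flips_fst: "co_LK2n_E n u v \<Longrightarrow> fst u \<noteq> fst v"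
  unfolding co_LK2n_E_def by auto

lemma co_LK2n_no_isolated:
  assumes "2 \<le> n"
  shows "\<forall>w\<in>co_LK2n_V n. \<exists>t\<in>co_LK2n_V n. co_LK2n_E n w t"
proof
  fix w assume w: "w \<in> co_LK2n_V n"
  define t where "t = (\<not> fst w, if snd w = 1 then 2 else 1 :: nat)"
  have "t \<in> co_LK2n_V n" "co_LK2n_E n w t"
    using w assms unfolding t_def co_LK2n_V_def co_LK2n_E_def by auto
  then show "\<exists>t\<in>co_LK2n_V n. co_LK2n_E n w t" by blast
qed

theorem corollary6p7:
  fixes V :: "'a set" and E :: "'a \<Rightarrow> 'a \<Rightarrow> bool" and X Y :: "'a set" and n :: nat
  assumes "n \<ge> 3"
    and "simple_graph V E" and "finite V"
    and "X \<union> Y = V" and "X \<inter> Y = {}" and "X \<noteq> {}" and "Y \<noteq> {}"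
    and "\<forall>u v. E u v \<longrightarrow> (u \<in> X \<and> v \<in> Y) \<or> (u \<in> Y \<and> v \<in> X)"
    and "\<exists>v\<in>V. \<forall>x\<in>X. E v x"
    and "\<exists>v\<in>V. \<forall>y\<in>Y. E v y"
    and "\<exists>v\<in>V. degree V E v \<ge> n"
    and "\<not> two_squares_embeds V E"
  shows "C_HH_symmetric V E (co_LK2n_V n) (co_LK2n_E n)"
proof -
  note bip = assms(8)
  have bip': "\<forall>u v. E u v \<longrightarrow> (u \<in> Y \<and> v \<in> X) \<or> (u \<in> X \<and> v \<in> Y)" and "Y \<inter> X = {}"
    using bip assms(5) by blast+
  have sym: "\<And>u v. E u v \<Longrightarrow> E v u" using assms(2) unfolding simple_graph_def by blast
  obtain y0 where "y0 \<in> V" "\<forall>x\<in>X. E y0 x" using assms(9) by blast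
  then have y0: "y0 \<in> Y" "\<forall>x\<in>X. E y0 x" using assms(6) bip assms(5) by blast+
  obtain x0 where "x0 \<in> V" "\<forall>y\<in>Y. E x0 y" using assms(10) by blast
  then have x0: "x0 \<in> X" "\<forall>y\<in>Y. E x0 y" using assms(7) bip assms(5) by blast+
  have "X \<subseteq> V" "Y \<subseteq> V" using assms(4) by auto
  have nested_X: "neighbourhoods_nested E X"
    by (rule neighbourhoods_nested_if_no_two_squares[OF sym bip assms(5) \<open>X \<subseteq> V\<close> \<open>Y \<subseteq> V\<close>
          x0 y0 assms(12)])
  have nested_Y: "neighbourhoods_nested E Y"
    by (rule neighbourhoods_nested_if_no_two_squares[OF sym bip' \<open>Y \<inter> X = {}\<close> \<open>Y \<subseteq> V\<close> \<open>X \<subseteq> V\<close>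
          y0 x0 assms(12)])
  have "2 \<le> n" using assms(1) by simp
  have "C_HH_morphic V E (co_LK2n_V n) (co_LK2n_E n)"
    by (rule C_HH_morphic_if_neighbourhoods_nested[OF sym bip assms(5) nested_X nested_Y
          co_LK2n_E_sym co_LK2n_no_isolated[OF \<open>2 \<le> n\<close>]])
  moreover have "C_HH_morphic (co_LK2n_V n) (co_LK2n_E n) V E"
    using C_HH_morphic_into_bipartite_with_dominating_vertices[OF co_LK2n_E_flips_fst sym bip
        assms(5,4) x0 y0] .
  ultimately show ?thesis unfolding C_HH_symmetric_def ..
qed

end
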